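(* Let $t \geq 1$ be an integer and let $\mathcal{F}$ be a finite family of finite sets with $\alpha(\mathcal{F}) \geq t$, $\mathcal{F}^{t,+} \neq \emptyset$ and $\mathcal{F}^{t,-} \neq \emptyset$. Suppose $k$ is an integer with $2 \leq k < \kappa(\mathcal{F},t)$ and $\mathcal{A}_1, \dots, \mathcal{A}_k$ are cross-$t$-intersecting sub-families of $\mathcal{F}$ such that $\sum_{i=1}^k |\mathcal{A}_i|$ is maximum among all $k$-tuples of cross-$t$-intersecting sub-families of $\mathcal{F}$. Then it is neither the case that $\mathcal{A}_i = \mathcal{F}$ for some $i \in [k]$ and $\mathcal{A}_j = \emptyset$ for all $j \in [k]\setminus\{i\}$, nor the case that $\mathcal{A}_1 = \dots = \mathcal{A}_k = \mathcal{L}$ for some largest $t$-intersecting sub-family $\mathcal{L}$ of $\mathcal{F}$.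
   Context: All sets and families are finite. A family $\mathcal{A}$ is $t$-intersecting if $|A \cap B| \geq t$ for all $A, B \in \mathcal{A}$ with $A \neq B$. Families $\mathcal{A}_1, \dots, \mathcal{A}_k$ (not necessarily distinct or non-empty) are cross-$t$-intersecting if for all $i \neq j$, $|A \cap B| \geq t$ for every $A \in \mathcal{A}_i$, $B \in \mathcal{A}_j$. $\alpha(\mathcal{F}) = \max\{|F| : F \in \mathcal{F}\}$; $l(\mathcal{F},t)$ is the size of a largest $t$-intersecting sub-family of $\mathcal{F}$. For a family $\mathcal{A}$, $\mathcal{A}^{t,+} = \{A \in \mathcal{A} : |A \cap B| \geq t \text{ for all } B \in \mathcal{A}\setminus\{A\}\}$ and $\mathcal{A}^{t,-} = \mathcal{A} \setminus \mathcal{A}^{t,+}$. For $\mathcal{A} \subseteq \mathcal{F}$, $\beta(\mathcal{F},t,\mathcal{A}) = \frac{l(\mathcal{F},t) - |\mathcal{A}^{t,+}|}{|\mathcal{A}^{t,-}|}$ if $\mathcal{A}^{t,-} \neq \emptyset$, and $\frac{l(\mathcal{F},t)}{|\mathcal{F}|}$ otherwise; $\beta(\mathcal{F},t) = \min_{\mathcal{A} \subseteq \mathcal{F}} \beta(\mathcal{F},t,\mathcal{A})$ and $\kappa(\mathcal{F},t) = 1/\beta(\mathcal{F},t)$. $[k] = \{1,\dots,k\}$. *)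

theory Defs
  imports Complex_Main
begin

definition alpha :: "'a set set \<Rightarrow> nat" where
  "alpha F = Max (card ` F)"

definition t_intersecting :: "nat \<Rightarrow> 'a set set \<Rightarrow> bool" where
  "t_intersecting t A \<longleftrightarrow> (\<forall>X\<in>A. \<forall>Y\<in>A. X \<noteq> Y \<longrightarrow> card (X \<inter> Y) \<ge> t)"

definition cross_t_intersecting :: "nat \<Rightarrow> nat \<Rightarrow> (nat \<Rightarrow> 'a set set) \<Rightarrow> bool" where
  "cross_t_intersecting t k A \<longleftrightarrow>
     (\<forall>i\<in>{1..k}. \<forall>j\<in>{1..k}. i \<noteq> j \<longrightarrow> (\<forall>X\<in>A i. \<forall>Y\<in>A j. card (X \<inter> Y) \<ge> t))"

definition lmax :: "'a set set \<Rightarrow> nat \<Rightarrow> nat" where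
  "lmax F t = Max {card G | G. G \<subseteq> F \<and> t_intersecting t G}"

definition tplus :: "nat \<Rightarrow> 'a set set \<Rightarrow> 'a set set" where
  "tplus t A = {X \<in> A. \<forall>Y\<in>A - {X}. card (X \<inter> Y) \<ge> t}"

definition tminus :: "nat \<Rightarrow> 'a set set \<Rightarrow> 'a set set" where
  "tminus t A = A - tplus t A"

definition beta_of :: "'a set set \<Rightarrow> nat \<Rightarrow> 'a set set \<Rightarrow> real" where
  "beta_of F t A =
     (if tminus t A \<noteq> {}
      then (real (lmax F t) - real (card (tplus t A))) / real (card (tminus t A))
      else real (lmax F t) / real (card F))"

definition beta :: "'a set set \<Rightarrow> nat \<Rightarrow> real" where
  "beta F t = Min {beta_of F t A | A. A \<subseteq> F}"

definition kappa :: "'a set set \<Rightarrow> nat \<Rightarrow> real" where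
  "kappa F t = 1 / beta F t"

end

theory Submission
  imports Defs
begin

text \<open>
  Every competitor used is a star: a family C at one index and a family P \<subseteq> C at all others,
  where every member of P t-intersects every member of C (itself included). A star is
  cross-t-intersecting with total size |C| + (k-1)|P|. If A_i = F and the other families are
  empty, the star with C = F and P = F^{t,+} is strictly larger. If all A_i equal a largest
  t-intersecting family, the total is k l(F,t); take A \<subseteq> F attaining beta(F,t). Then
  k beta(F,t,A) < 1 says exactly that the star with C = A, P = A^{t,+} (or C = F, P = {}
  when A^{t,-} is empty) has total larger than k l(F,t). Either way maximality is violated.
\<close>

lemma tplus_subset: "tplus t A \<subseteq> A"
  unfolding tplus_def by auto

lemma card_tplus_add_card_tminus:
  assumes "finite A"
  shows "card (tplus t A) + card (tminus t A) = card A"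
  unfolding tminus_def using assms tplus_subset
  by (metis card_Diff_subset card_mono finite_subset le_add_diff_inverse)

text \<open>Non-emptiness of A^{t,-} supplies a second set, so that members of A^{t,+} also have size \<ge> t.\<close>
lemma t_le_card_Int_tplus:
  assumes "tminus t A \<noteq> {}" and "finite Y"
    and "X \<in> A" and "Y \<in> tplus t A"
  shows "t \<le> card (X \<inter> Y)"
proof (cases "X = Y")
  case True
  obtain Z where "Z \<in> A" "Z \<notin> tplus t A"
    using assms(1) unfolding tminus_def by auto
  then have "t \<le> card (Y \<inter> Z)"
    using assms(4) unfolding tplus_def by auto
  also have "\<dots> \<le> card Y"
    using assms(2) by (simp add: card_mono)
  finally show ?thesis
    using True by simp
next
  case False
  then show ?thesis
    using assms(3,4) unfolding tplus_def by (auto simp: Int_commute)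
qed

lemma cross_t_intersecting_star:
  assumes "P \<subseteq> C" and "\<forall>X\<in>C. \<forall>Y\<in>P. t \<le> card (X \<inter> Y)"
  shows "cross_t_intersecting t k (\<lambda>m. if m = i then C else P)"
  unfolding cross_t_intersecting_def
proof (intro ballI impI)
  fix a b X Y
  assume "a \<noteq> b" "X \<in> (if a = i then C else P)" "Y \<in> (if b = i then C else P)"
  then consider "X \<in> C" "Y \<in> P" | "X \<in> P" "Y \<in> C"
    using assms(1) by (auto split: if_splits)
  then show "t \<le> card (X \<inter> Y)"
    using assms(2) by cases (auto simp: Int_commute)
qed

lemma sum_card_star:
  fixes B :: "nat \<Rightarrow> 'a set set"
  assumes "i \<in> {1..k}" and "B i = C" and "\<forall>m\<in>{1..k} - {i}. B m = P"
  shows "(\<Sum>m=1..k. card (B m)) = card C + (k - 1) * card P"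
proof -
  have "(\<Sum>m=1..k. card (B m)) = card (B i) + (\<Sum>m\<in>{1..k} - {i}. card (B m))"
    using assms(1) by (simp add: sum.remove)
  also have "(\<Sum>m\<in>{1..k} - {i}. card (B m)) = (\<Sum>m\<in>{1..k} - {i}. card P)"
    using assms(3) by (intro sum.cong) auto
  finally show ?thesis
    using assms(1,2) by (simp add: card_Diff_singleton)
qed

lemma beta_attained:
  assumes "finite F"
  obtains A where "A \<subseteq> F" and "beta F t = beta_of F t A"
proof -
  have "beta F t \<in> {beta_of F t A | A. A \<subseteq> F}"
    unfolding beta_def using assms by (intro Min_in) auto
  then show ?thesis
    using that by blast
qed

lemma mult_beta_less_one:
  assumes "real k < kappa F t"
  shows "real k * beta F t < 1"
proof -
  have "beta F t > 0"
  proof (rule ccontr)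
    assume "\<not> beta F t > 0"
    then have "kappa F t \<le> 0"
      unfolding kappa_def by (simp add: divide_le_0_iff)
    then show False
      using assms by simp
  qed
  then show ?thesis
    using assms unfolding kappa_def by (simp add: field_simps)
qed

lemma star_beats_lmax:
  assumes "finite F" and "F \<noteq> {}" and "\<forall>X\<in>F. finite X"
    and "1 \<le> k" and "real k < kappa F t"
  obtains C P where "C \<subseteq> F" and "P \<subseteq> C" and "\<forall>X\<in>C. \<forall>Y\<in>P. t \<le> card (X \<inter> Y)"
    and "k * lmax F t < card C + (k - 1) * card P"
proof -
  obtain A where A: "A \<subseteq> F" and beta_eq: "beta F t = beta_of F t A"
    using beta_attained[OF assms(1)] .
  have finite_A: "finite A"
    using A assms(1) finite_subset by blast
  have kb: "real k * beta_of F t A < 1"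
    using mult_beta_less_one[OF assms(5)] beta_eq by simp
  show ?thesis
  proof (cases "tminus t A = {}")
    case True
    have "card F > 0"
      using assms(1,2) by (simp add: card_gt_0_iff)
    then have "real k * real (lmax F t) < real (card F)"
      using kb True unfolding beta_of_def by (simp add: field_simps)
    then have "k * lmax F t < card F"
      by (simp flip: of_nat_mult)
    then show ?thesis
      using that[of F "{}"] by simp
  next
    case False
    let ?p = "card (tplus t A)" and ?q = "card (tminus t A)"
    have "?q > 0"
      using False finite_A unfolding tminus_def by (simp add: card_gt_0_iff)
    then have "real k * (real (lmax F t) - real ?p) < real ?q"
      using kb False unfolding beta_of_def by (simp add: field_simps)
    then have "k * lmax F t < ?q + k * ?p"
      by (simp add: algebra_simps flip: of_nat_mult of_nat_add)
    also have "\<dots> = card A + (k - 1) * ?p"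
      using card_tplus_add_card_tminus[OF finite_A, of t] assms(4)
      by (cases k) auto
    finally show ?thesis
      using that[OF A tplus_subset] t_le_card_Int_tplus[OF False] A assms(3) tplus_subset
      by (meson subsetD)
  qed
qed

lemma star_total_le_maximum:
  fixes A :: "nat \<Rightarrow> 'a set set"
  assumes maximum: "\<forall>B :: nat \<Rightarrow> 'a set set. (\<forall>i\<in>{1..k}. B i \<subseteq> F) \<and> cross_t_intersecting t k B
            \<longrightarrow> (\<Sum>i=1..k. card (B i)) \<le> (\<Sum>i=1..k. card (A i))"
    and "1 \<le> k" and "C \<subseteq> F" and "P \<subseteq> C" and "\<forall>X\<in>C. \<forall>Y\<in>P. t \<le> card (X \<inter> Y)"
  shows "card C + (k - 1) * card P \<le> (\<Sum>i=1..k. card (A i))"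
proof -
  let ?B = "\<lambda>m. if m = 1 then C else P"
  have "\<forall>i\<in>{1..k}. ?B i \<subseteq> F"
    using assms(3,4) by auto
  then have "(\<Sum>i=1..k. card (?B i)) \<le> (\<Sum>i=1..k. card (A i))"
    using maximum cross_t_intersecting_star[OF assms(4,5), of k 1] by presburger
  moreover have "(\<Sum>i=1..k. card (?B i)) = card C + (k - 1) * card P"
    using assms(2) by (intro sum_card_star[of 1 k ?B]) auto
  ultimately show ?thesis
    by simp
qed

theorem proposition4p5:
  fixes F :: "'a set set" and t k :: nat and A :: "nat \<Rightarrow> 'a set set"
  assumes "t \<ge> 1"
    and "finite F" and "\<forall>X\<in>F. finite X"
    and "alpha F \<ge> t"
    and "tplus t F \<noteq> {}" and "tminus t F \<noteq> {}"
    and "2 \<le> k" and "real k < kappa F t"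
    and "\<forall>i\<in>{1..k}. A i \<subseteq> F"
    and "cross_t_intersecting t k A"
    and "\<forall>B :: nat \<Rightarrow> 'a set set. (\<forall>i\<in>{1..k}. B i \<subseteq> F) \<and> cross_t_intersecting t k B
            \<longrightarrow> (\<Sum>i=1..k. card (B i)) \<le> (\<Sum>i=1..k. card (A i))"
  shows "\<not> (\<exists>i\<in>{1..k}. A i = F \<and> (\<forall>j\<in>{1..k} - {i}. A j = {}))
       \<and> \<not> (\<exists>L. L \<subseteq> F \<and> t_intersecting t L \<and> card L = lmax F t \<and> (\<forall>i\<in>{1..k}. A i = L))"
proof -
  have "tplus t F \<subseteq> F" and "F \<noteq> {}"
    using tplus_subset assms(5) by blast+
  have "1 \<le> k"
    using assms(7) by simp
  note star_le = star_total_le_maximum[OF assms(11) \<open>1 \<le> k\<close>]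
  have "card F + (k - 1) * card (tplus t F) \<le> (\<Sum>i=1..k. card (A i))"
    using assms(3) \<open>tplus t F \<subseteq> F\<close>
    by (intro star_le t_le_card_Int_tplus[OF assms(6)] ballI) auto
  moreover have "card (tplus t F) > 0"
    using assms(2,5) \<open>tplus t F \<subseteq> F\<close> by (meson card_gt_0_iff finite_subset)
  then have "(k - 1) * card (tplus t F) > 0"
    using assms(7) by simp
  ultimately have single_lt: "card F < (\<Sum>i=1..k. card (A i))"
    by linarith
  obtain C P where "C \<subseteq> F" "P \<subseteq> C" "\<forall>X\<in>C. \<forall>Y\<in>P. t \<le> card (X \<inter> Y)"
    and "k * lmax F t < card C + (k - 1) * card P"
    using star_beats_lmax[OF assms(2) \<open>F \<noteq> {}\<close> assms(3) \<open>1 \<le> k\<close> assms(8)] by blast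
  then have lmax_lt: "k * lmax F t < (\<Sum>i=1..k. card (A i))"
    using star_le by (meson less_le_trans)
  show ?thesis
  proof (intro conjI notI; elim bexE exE conjE)
    fix i
    assume "i \<in> {1..k}" "A i = F" "\<forall>j\<in>{1..k} - {i}. A j = {}"
    then show False
      using sum_card_star[of i k A F "{}"] single_lt by simp
  next
    fix L
    assume "card L = lmax F t" "\<forall>i\<in>{1..k}. A i = L"
    then have "(\<Sum>i=1..k. card (A i)) = k * lmax F t"
      using sum_card_star[of 1 k A L L] \<open>1 \<le> k\<close> by (cases k) auto
    then show False
      using lmax_lt by simp
  qed
qed

end
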